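(* Let $p\ge3$ be prime and $A,\iota,\chi,\gamma_k$ as in the context. Then \[\chi\circ\gamma_{p-1}+\gamma_{p-1}\circ\chi+\sum_{k=2}^{p-2}\gamma_k\circ\gamma_{p-k}=\iota^{p-1}.\]
   Context: Let $p\ge3$ be prime, $l:=2(p-1)$; $\omega(i):=r+1$ if $i=jl+r$ with $0\le r\le p-2$, and $\omega(i):=l-r$ if $p-1\le r\le l-1$. Let $P_1,\dots,P_{p-1}$ and $e_k$ (identity of $P_k$), $e_{1,1},e_{p-1,p-1},e_{k+1,k}:P_k\to P_{k+1},e_{k,k+1}:P_{k+1}\to P_k$ be as follows: with $\Gamma=\prod_{\lambda\vdash p}\mathbb{Z}_{(p)}^{n_\lambda\times n_\lambda}$ ($n_\lambda$ = Specht module rank), hooks $\lambda^k=(p-k+1,1^{k-1})$, $n^k_{\rm b}=\binom{p-2}{k-1}$, $n^k_{\rm c}=\binom{p-2}{k-2}$, $\Lambda=\{\rho\in\Gamma:\rho^{\lambda^k}_{\rm bb}\equiv\rho^{\lambda^{k+1}}_{\rm cc}\bmod p,\ \rho^{\lambda^k}_{\rm bc}\equiv0\bmod p\}$ (blocks ${\rm cc}$ upper-left $n^k_{\rm c}\times n^k_{\rm c}$, ${\rm bc}$ upper-right, ${\rm bb}$ lower-right), $\mathbb{F}_p\mathfrak{S}_p$ identified with $\Lambda/p\Lambda$ via the known isomorphism $\mathbb{Z}_{(p)}\mathfrak{S}_p\cong\Lambda$, matrix units $\eta_{\lambda,i,j}$, $\tilde e_k=\eta_{\lambda^k,n^k_{\rm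 c}+1,n^k_{\rm c}+1}+\eta_{\lambda^{k+1},1,1}$, $P_k=\tilde e_k\Lambda/p\tilde e_k\Lambda$, maps induced by left multiplication with $p\eta_{\lambda^1,1,1}$, $p\eta_{\lambda^p,1,1}$, $\eta_{\lambda^{k+1},n^{k+1}_{\rm c}+1,1}$, $p\eta_{\lambda^{k+1},1,n^{k+1}_{\rm c}+1}$. Resolution $\mathcal P$: $\mathcal P_i=P_{\omega(i)}$ ($i\ge0$), $0$ ($i<0$), $d_i=e_{\omega(i-1),\omega(i)}$. $\operatorname{Hom}^z(C,C')=\prod_i\operatorname{Hom}(C_{i+z},C'_i)$, composition componentwise; $\lfloor g\rfloor^y_x$ ($g:C_x\to C'_y$) has $g$ as its $y$-th component, zero elsewhere. $A=\bigoplus_z\operatorname{Hom}^z_{\mathbb{F}_p\mathfrak{S}_p}(\mathcal P,\mathcal P)$ (graded algebra under composition). $\iota:=\sum_{i\ge0}\lfloor e_{\omega(i)}\rfloor^i_{i+l}$; $\chi:=\sum_{i\ge0}(\lfloor e_1\rfloor^{il}_{il+l-1}+\sum_{k=1}^{p-2}\lfloor e_{k+1,k}\rfloor^{il+k}_{il+l-1+k}+\lfloor e_{p-1}\rfloor^{il+p-1}_{il+l-1+p-1}+\sum_{k=1}^{p-2}\lfloor e_{p-k-1,p-k}\rfloor^{il+p-1+k}_{il+l-1+p-1+k})$; $\gamma_k:=\sum_{i\ge0}(\lfloor e_k\rfloor^{k-1+li}_{k(l-1)+li}+\lfloor e_{p-k}\rfloor^{k-1+(p-1)+li}_{k(l-1)+(p-1)+li})$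 for $k\in[2,p-1]$. *)

theory Defs
  imports Complex_Main "HOL-Computational_Algebra.Primes"
begin

definition is_partition :: "nat \<Rightarrow> nat list \<Rightarrow> bool" where
  "is_partition n lam \<longleftrightarrow> sum_list lam = n \<and> (\<forall>x\<in>set lam. 0 < x) \<and> sorted_wrt (\<ge>) lam"

(* Young diagram, 0-based (row, column) *)
definition cells :: "nat list \<Rightarrow> (nat \<times> nat) set" where
  "cells lam = {(r, c). r < length lam \<and> c < lam ! r}"

definition syt :: "nat list \<Rightarrow> (nat \<times> nat \<Rightarrow> nat) set" where
  "syt lam = {T. (\<forall>x. x \<notin> cells lam \<longrightarrow> T x = 0)
     \<and> bij_betw T (cells lam) {1..sum_list lam}
     \<and> (\<forall>r c. (r, Suc c) \<in> cells lam \<longrightarrow> T (r, c) < T (r, Suc c))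
     \<and> (\<forall>r c. (Suc r, c) \<in> cells lam \<longrightarrow> T (r, c) < T (Suc r, c))}"

(* rank n_lambda of the Specht module = number of standard Young tableaux *)
definition nlam :: "nat list \<Rightarrow> nat" where
  "nlam lam = card (syt lam)"

definition hook :: "nat \<Rightarrow> nat \<Rightarrow> nat list" where
  "hook p k = (p - k + 1) # replicate (k - 1) 1"

definition nb :: "nat \<Rightarrow> nat \<Rightarrow> nat" where
  "nb p k = (p - 2) choose (k - 1)"

definition nc :: "nat \<Rightarrow> nat \<Rightarrow> nat" where
  "nc p k = (if 2 \<le> k then (p - 2) choose (k - 2) else 0)"

type_synonym elt = "nat list \<Rightarrow> nat \<Rightarrow> nat \<Rightarrow> rat"

(* membership in Z_(p) *)
definition zp :: "nat \<Rightarrow> rat \<Rightarrow> bool" where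
  "zp p q \<longleftrightarrow> \<not> int p dvd snd (quotient_of q)"

definition congp :: "nat \<Rightarrow> rat \<Rightarrow> rat \<Rightarrow> bool" where
  "congp p x y \<longleftrightarrow> zp p ((x - y) / of_nat p)"

(* Gamma = prod_{lambda |- p} Z_(p)^{n_lambda x n_lambda}, matrices indexed 1..n_lambda *)
definition Gam :: "nat \<Rightarrow> elt set" where
  "Gam p = {rho. (\<forall>lam i j. rho lam i j \<noteq> 0 \<longrightarrow>
                      is_partition p lam \<and> i \<in> {1..nlam lam} \<and> j \<in> {1..nlam lam})
               \<and> (\<forall>lam i j. zp p (rho lam i j))}"

definition mmul :: "elt \<Rightarrow> elt \<Rightarrow> elt" where
  "mmul a b = (\<lambda>lam i j. \<Sum>t = 1..nlam lam. a lam i t * b lam t j)"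

definition madd :: "elt \<Rightarrow> elt \<Rightarrow> elt" where
  "madd a b = (\<lambda>lam i j. a lam i j + b lam i j)"

definition msub :: "elt \<Rightarrow> elt \<Rightarrow> elt" where
  "msub a b = (\<lambda>lam i j. a lam i j - b lam i j)"

definition msc :: "rat \<Rightarrow> elt \<Rightarrow> elt" where
  "msc c a = (\<lambda>lam i j. c * a lam i j)"

definition eta :: "nat list \<Rightarrow> nat \<Rightarrow> nat \<Rightarrow> elt" where
  "eta lam i j = (\<lambda>lam' i' j'. if lam' = lam \<and> i' = i \<and> j' = j then 1 else 0)"

(* Lambda: blocks cc = upper-left n_c x n_c, bc = upper-right (rows 1..n_c, columns n_c+1..),
   bb = lower-right *)
definition Lam :: "nat \<Rightarrow> elt set" where
  "Lam p = {rho \<in> Gam p. \<forall>k \<in> {1..p-1}.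
     (\<forall>a \<in> {1..nb p k}. \<forall>b \<in> {1..nb p k}.
        congp p (rho (hook p k) (nc p k + a) (nc p k + b)) (rho (hook p (Suc k)) a b))
   \<and> (\<forall>a \<in> {1..nc p k}. \<forall>b \<in> {1..nb p k}. congp p (rho (hook p k) a (nc p k + b)) 0)}"

definition etl :: "nat \<Rightarrow> nat \<Rightarrow> elt" where
  "etl p k = madd (eta (hook p k) (nc p k + 1) (nc p k + 1)) (eta (hook p (Suc k)) 1 1)"

definition eL :: "nat \<Rightarrow> nat \<Rightarrow> elt set" where
  "eL p k = {mmul (etl p k) rho | rho. rho \<in> Lam p}"

definition pEL :: "nat \<Rightarrow> nat \<Rightarrow> elt set" where
  "pEL p k = {msc (of_nat p) x | x. x \<in> eL p k}"

definition Pmod :: "nat \<Rightarrow> nat \<Rightarrow> elt set set" where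
  "Pmod p k = eL p k // {(x, y). x \<in> eL p k \<and> y \<in> eL p k \<and> msub x y \<in> pEL p k}"

definition ind :: "nat \<Rightarrow> nat \<Rightarrow> elt \<Rightarrow> elt set \<Rightarrow> elt set" where
  "ind p k' a X = {y \<in> eL p k'. \<exists>x \<in> X. msub y (mmul a x) \<in> pEL p k'}"

definition zeroc :: "nat \<Rightarrow> nat \<Rightarrow> elt set" where
  "zeroc p k = {y \<in> eL p k. y \<in> pEL p k}"

definition addc :: "nat \<Rightarrow> nat \<Rightarrow> elt set \<Rightarrow> elt set \<Rightarrow> elt set" where
  "addc p k X Y = {z \<in> eL p k. \<exists>x \<in> X. \<exists>y \<in> Y. msub z (madd x y) \<in> pEL p k}"

definition e_up :: "nat \<Rightarrow> nat \<Rightarrow> elt set \<Rightarrow> elt set" where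
  "e_up p k = ind p (Suc k) (eta (hook p (Suc k)) (nc p (Suc k) + 1) 1)"

definition e_down :: "nat \<Rightarrow> nat \<Rightarrow> elt set \<Rightarrow> elt set" where
  "e_down p k = ind p k (msc (of_nat p) (eta (hook p (Suc k)) 1 (nc p (Suc k) + 1)))"

definition ll :: "nat \<Rightarrow> nat" where
  "ll p = 2 * (p - 1)"

definition omega :: "nat \<Rightarrow> nat \<Rightarrow> nat" where
  "omega p i = (let r = i mod ll p in if r \<le> p - 2 then r + 1 else ll p - r)"

(* a homogeneous element of Hom^z(P,P): its i-th component (i \<ge> 0) is a map
   P_{omega(i+z)} \<rightarrow> P_{omega(i)}; components with i < 0 are zero maps into 0 *)
type_synonym gmap = "nat \<Rightarrow> elt set \<Rightarrow> elt set"

definition gcomp :: "gmap \<Rightarrow> nat \<Rightarrow> gmap \<Rightarrow> gmap" where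
  "gcomp f zf g = (\<lambda>i. f i \<circ> g (i + zf))"

definition gadd :: "nat \<Rightarrow> gmap \<Rightarrow> gmap \<Rightarrow> gmap" where
  "gadd p f g = (\<lambda>i X. addc p (omega p i) (f i X) (g i X))"

definition gzero :: "nat \<Rightarrow> gmap" where
  "gzero p = (\<lambda>i X. zeroc p (omega p i))"

(* iota = sum_i floor(e_{omega(i)})^i_{i+l}; degree l *)
definition iota :: "nat \<Rightarrow> gmap" where
  "iota p = (\<lambda>i. id)"

fun iota_pow :: "nat \<Rightarrow> nat \<Rightarrow> gmap" where
  "iota_pow p 0 = (\<lambda>i. id)"
| "iota_pow p (Suc n) = gcomp (iota p) (ll p) (iota_pow p n)"

(* chi; degree l-1.  Component il+r (0 \<le> r < l):
   r = 0: e_1;  r = k \<in> [1,p-2]: e_{k+1,k};  r = p-1: e_{p-1};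
   r = p-1+k, k \<in> [1,p-2]: e_{p-k-1,p-k} *)
definition chi :: "nat \<Rightarrow> gmap" where
  "chi p = (\<lambda>j. let r = j mod ll p in
     if r = 0 then id
     else if r \<le> p - 2 then e_up p r
     else if r = p - 1 then id
     else e_down p (p - (r - (p - 1)) - 1))"

definition gamma :: "nat \<Rightarrow> nat \<Rightarrow> gmap" where
  "gamma p k = (\<lambda>j.
     if \<exists>i. j = k - 1 + ll p * i then id
     else if \<exists>i. j = k - 1 + (p - 1) + ll p * i then id
     else (\<lambda>X. zeroc p (omega p j)))"

definition deg_chi :: "nat \<Rightarrow> nat" where
  "deg_chi p = ll p - 1"

definition deg_gamma :: "nat \<Rightarrow> nat \<Rightarrow> nat" where
  "deg_gamma p k = k * (ll p - 1) - (k - 1)"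

end

theory Submission
  imports Defs "HOL-Library.Function_Algebras"
begin

text \<open>
  The identity map \<open>\<iota>\<close> has all components equal to the identity, so the right-hand side is the
  identity of \<open>P\<^bsub>\<omega>(j)\<^esub>\<close> in every degree \<open>j\<close>. On the left, every summand is, in degree \<open>j\<close>, either the identity
  or the zero map, according to the residue \<open>r = j mod l\<close>: \<open>\<chi>\<gamma>\<^sub>p\<^sub>-\<^sub>1\<close> is the identity exactly for
  \<open>r \<in> {0, p-1}\<close>, \<open>\<gamma>\<^sub>p\<^sub>-\<^sub>1\<chi>\<close> for \<open>r \<in> {p-2, 2p-3}\<close>, and \<open>\<gamma>\<^sub>k\<gamma>\<^sub>p\<^sub>-\<^sub>k\<close> for \<open>r \<in> {k-1, k+p-2}\<close>; these sets
  partition \<open>{0..l-1}\<close>. The only non-formal input is that a composite through a zero map is zero,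
  i.e. that the maps \<open>e\<^sub>k\<^sub>+\<^sub>1\<^sub>,\<^sub>k\<close> and \<open>e\<^sub>k\<^sub>,\<^sub>k\<^sub>+\<^sub>1\<close> induced by left multiplication send
  \<open>p e\<^sub>k\<Lambda>\<close> into \<open>p e\<^sub>k\<^sub>'\<Lambda>\<close> whenever the product lies in \<open>e\<^sub>k\<^sub>'\<Lambda>\<close>. For \<open>e\<^sub>k\<^sub>,\<^sub>k\<^sub>+\<^sub>1\<close> this holds because the multiplier is divisible by \<open>p\<close>;
  for \<open>e\<^sub>k\<^sub>+\<^sub>1\<^sub>,\<^sub>k\<close> the congruence on the \<open>bc\<close> block of \<open>\<lambda>\<^sup>k\<^sup>+\<^sup>1\<close> in the definition of \<open>\<Lambda>\<close> is
  exactly what makes the moved row satisfy the \<open>bb\<close> congruence.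
\<close>

section \<open>The local ring \<open>\<int>\<^sub>(\<^sub>p\<^sub>)\<close>\<close>

lemma zp_iff_fraction:
  assumes "prime p"
  shows "zp p q \<longleftrightarrow> (\<exists>a b. \<not> int p dvd b \<and> q = of_int a / of_int b)"
proof
  assume "zp p q"
  obtain n d where nd: "quotient_of q = (n, d)" by (cases "quotient_of q")
  then have "q = of_int n / of_int d" "\<not> int p dvd d"
    using \<open>zp p q\<close> quotient_of_div unfolding zp_def by auto
  then show "\<exists>a b. \<not> int p dvd b \<and> q = of_int a / of_int b" by blast
next
  assume "\<exists>a b. \<not> int p dvd b \<and> q = of_int a / of_int b"
  then obtain a b where ab: "\<not> int p dvd b" "q = of_int a / of_int b" by blast
  obtain n d where nd: "quotient_of q = (n, d)" by (cases "quotient_of q")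
  have "b \<noteq> 0" using ab(1) by auto
  have "d > 0" "q = of_int n / of_int d" "coprime n d"
    using nd quotient_of_denom_pos quotient_of_div quotient_of_coprime by blast+
  then have "of_int (a * d) = (of_int (n * b) :: rat)"
    using ab(2) \<open>b \<noteq> 0\<close> by (simp add: field_simps)
  then have "d dvd n * b" by (metis of_int_eq_iff dvd_triv_right)
  then have "d dvd b" using \<open>coprime n d\<close> by (metis coprime_commute coprime_dvd_mult_right_iff)
  then show "zp p q" unfolding zp_def using nd ab(1) dvd_trans by fastforce
qed

lemma zp_of_int: "prime p \<Longrightarrow> zp p (of_int a)"
  using prime_gt_1_nat[of p] unfolding zp_def by simp

lemma zp_zero: "prime p \<Longrightarrow> zp p 0"
  using zp_of_int[of p 0] by simp

lemma zp_add:
  assumes p: "prime p" and "zp p x" "zp p y"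
  shows "zp p (x + y)"
proof -
  obtain a b c d where "\<not> int p dvd b" "x = of_int a / of_int b"
      "\<not> int p dvd d" "y = of_int c / of_int d"
    using assms zp_iff_fraction by meson
  moreover from this have "\<not> int p dvd b * d" "b \<noteq> 0" "d \<noteq> 0"
    using p prime_dvd_mult_iff[of "int p"] by auto
  ultimately have "\<not> int p dvd b * d \<and> x + y = of_int (a * d + c * b) / of_int (b * d)"
    by (simp add: field_simps)
  then show ?thesis using zp_iff_fraction[OF p] by blast
qed

lemma zp_mult:
  assumes p: "prime p" and "zp p x" "zp p y"
  shows "zp p (x * y)"
proof -
  obtain a b c d where "\<not> int p dvd b" "x = of_int a / of_int b"
      "\<not> int p dvd d" "y = of_int c / of_int d"
    using assms zp_iff_fraction by meson
  moreover from this have "\<not> int p dvd b * d"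
    using p prime_dvd_mult_iff[of "int p"] by auto
  ultimately have "\<not> int p dvd b * d \<and> x * y = of_int (a * c) / of_int (b * d)"
    by simp
  then show ?thesis using zp_iff_fraction[OF p] by blast
qed

lemma zp_diff:
  assumes p: "prime p" and "zp p x" "zp p y"
  shows "zp p (x - y)"
  using zp_add[OF p \<open>zp p x\<close> zp_mult[OF p zp_of_int[OF p, of "-1"] \<open>zp p y\<close>]] by simp

lemma congp_refl: "prime p \<Longrightarrow> congp p x x"
  unfolding congp_def using zp_of_int[of p 0] by simp

lemma congp_add: "prime p \<Longrightarrow> congp p x y \<Longrightarrow> congp p x' y' \<Longrightarrow> congp p (x + x') (y + y')"
  unfolding congp_def using zp_add[of p "(x - y) / of_nat p" "(x' - y') / of_nat p"]
  by (simp add: add_divide_distrib[symmetric] algebra_simps)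

lemma congp_diff: "prime p \<Longrightarrow> congp p x y \<Longrightarrow> congp p x' y' \<Longrightarrow> congp p (x - x') (y - y')"
  unfolding congp_def using zp_diff[of p "(x - y) / of_nat p" "(x' - y') / of_nat p"]
  by (simp add: diff_divide_distrib[symmetric] algebra_simps)

lemma congp_mult_p:
  "prime p \<Longrightarrow> zp p x \<Longrightarrow> zp p y \<Longrightarrow> congp p (of_nat p * x) (of_nat p * y)"
  unfolding congp_def using prime_gt_0_nat[of p]
  by (simp add: zp_diff right_diff_distrib[symmetric])

lemma zp_mult_p: "prime p \<Longrightarrow> zp p x \<Longrightarrow> zp p (of_nat p * x)"
  using zp_mult[of p "of_int (int p)" x] zp_of_int[of p "int p"] by simp

section \<open>The order \<open>\<Lambda>\<close> and its lattices \<open>e\<^sub>k\<Lambda>\<close>\<close>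

lemma madd_eq_plus [simp]: "madd a b = a + b"
  unfolding madd_def by (simp add: fun_eq_iff)

lemma msub_eq_minus [simp]: "msub a b = a - b"
  unfolding msub_def by (simp add: fun_eq_iff)

lemma mmul_zero_right [simp]: "mmul a 0 = 0"
  unfolding mmul_def by (simp add: fun_eq_iff)

lemma mmul_add_right: "mmul a (b + c) = mmul a b + mmul a c"
  unfolding mmul_def by (simp add: fun_eq_iff distrib_left sum.distrib)

lemma mmul_diff_right: "mmul a (b - c) = mmul a b - mmul a c"
  unfolding mmul_def by (simp add: fun_eq_iff right_diff_distrib sum_subtractf)

lemma mmul_add_left: "mmul (a + b) c = mmul a c + mmul b c"
  unfolding mmul_def by (simp add: fun_eq_iff distrib_right sum.distrib)

lemma mmul_msc_right: "mmul a (msc c b) = msc c (mmul a b)"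
  unfolding mmul_def msc_def by (simp add: sum_distrib_left algebra_simps)

lemma mmul_msc_left: "mmul (msc c a) b = msc c (mmul a b)"
  unfolding mmul_def msc_def by (simp add: sum_distrib_left algebra_simps)

lemma msc_zero [simp]: "msc c 0 = 0"
  unfolding msc_def by (simp add: fun_eq_iff)

lemma msc_add: "msc c (a + b) = msc c a + msc c b"
  unfolding msc_def by (simp add: fun_eq_iff algebra_simps)

lemma msc_diff: "msc c (a - b) = msc c a - msc c b"
  unfolding msc_def by (simp add: fun_eq_iff algebra_simps)

lemma mmul_eta:
  "mmul (eta lam0 i0 j0) M lam i j =
     (if lam = lam0 \<and> i = i0 \<and> j0 \<in> {1..nlam lam0} then M lam0 j0 j else 0)"
proof (cases "lam = lam0 \<and> i = i0")
  case True
  then have "mmul (eta lam0 i0 j0) M lam i j = (\<Sum>t = 1..nlam lam. if t = j0 then M lam t j else 0)"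
    unfolding mmul_def eta_def by (intro sum.cong) auto
  with True show ?thesis by (simp add: sum.delta)
qed (auto simp: mmul_def eta_def)

lemma mmul_etl:
  "mmul (etl p k) rho lam i j =
     (if lam = hook p k \<and> i = nc p k + 1 \<and> nc p k + 1 \<le> nlam (hook p k)
      then rho (hook p k) (nc p k + 1) j else 0)
   + (if lam = hook p (Suc k) \<and> i = 1 \<and> 1 \<le> nlam (hook p (Suc k))
      then rho (hook p (Suc k)) 1 j else 0)"
  unfolding etl_def madd_eq_plus mmul_add_left plus_fun_apply mmul_eta by simp

lemma Gam_zp: "rho \<in> Gam p \<Longrightarrow> zp p (rho lam i j)"
  unfolding Gam_def by blast

lemma Gam_support: "rho \<in> Gam p \<Longrightarrow> rho lam i j \<noteq> 0 \<Longrightarrow>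
    is_partition p lam \<and> i \<in> {1..nlam lam} \<and> j \<in> {1..nlam lam}"
  unfolding Gam_def by blast

lemma Lam_Gam: "rho \<in> Lam p \<Longrightarrow> rho \<in> Gam p"
  unfolding Lam_def by blast

lemma Lam_bb: "rho \<in> Lam p \<Longrightarrow> k \<in> {1..p-1} \<Longrightarrow> a \<in> {1..nb p k} \<Longrightarrow> b \<in> {1..nb p k} \<Longrightarrow>
    congp p (rho (hook p k) (nc p k + a) (nc p k + b)) (rho (hook p (Suc k)) a b)"
  unfolding Lam_def by blast

lemma Lam_bc: "rho \<in> Lam p \<Longrightarrow> k \<in> {1..p-1} \<Longrightarrow> a \<in> {1..nc p k} \<Longrightarrow> b \<in> {1..nb p k} \<Longrightarrow>
    congp p (rho (hook p k) a (nc p k + b)) 0"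
  unfolding Lam_def by blast

lemma LamI:
  assumes "rho \<in> Gam p"
    and "\<And>k a b. k \<in> {1..p-1} \<Longrightarrow> a \<in> {1..nb p k} \<Longrightarrow> b \<in> {1..nb p k} \<Longrightarrow>
      congp p (rho (hook p k) (nc p k + a) (nc p k + b)) (rho (hook p (Suc k)) a b)"
    and "\<And>k a b. k \<in> {1..p-1} \<Longrightarrow> a \<in> {1..nc p k} \<Longrightarrow> b \<in> {1..nb p k} \<Longrightarrow>
      congp p (rho (hook p k) a (nc p k + b)) 0"
  shows "rho \<in> Lam p"
  using assms unfolding Lam_def by blast

lemma pointwise_Lam:
  fixes f :: "rat \<Rightarrow> rat \<Rightarrow> rat"
  assumes p: "prime p" and a: "a \<in> Lam p" and b: "b \<in> Lam p" and f0: "f 0 0 = 0"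
    and f_zp: "\<And>x y. zp p x \<Longrightarrow> zp p y \<Longrightarrow> zp p (f x y)"
    and f_congp: "\<And>x x' y y'. congp p x x' \<Longrightarrow> congp p y y' \<Longrightarrow> congp p (f x y) (f x' y')"
  shows "(\<lambda>lam i j. f (a lam i j) (b lam i j)) \<in> Lam p"
proof (rule LamI)
  have "a \<in> Gam p" "b \<in> Gam p" using a b Lam_Gam by blast+
  then show "(\<lambda>lam i j. f (a lam i j) (b lam i j)) \<in> Gam p"
    unfolding Gam_def using f0 f_zp by (smt (verit, ccfv_threshold) mem_Collect_eq)
next
  fix k x y assume "k \<in> {1..p-1}" "x \<in> {1..nb p k}" "y \<in> {1..nb p k}"
  then show "congp p (f (a (hook p k) (nc p k + x) (nc p k + y)) (b (hook p k) (nc p k + x) (nc p k + y)))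
      (f (a (hook p (Suc k)) x y) (b (hook p (Suc k)) x y))"
    using f_congp Lam_bb a b by blast
next
  fix k x y assume "k \<in> {1..p-1}" "x \<in> {1..nc p k}" "y \<in> {1..nb p k}"
  then show "congp p (f (a (hook p k) x (nc p k + y)) (b (hook p k) x (nc p k + y))) 0"
    using f_congp[OF Lam_bc[OF a] Lam_bc[OF b]] f0 by metis
qed

lemma zero_Lam: "prime p \<Longrightarrow> 0 \<in> Lam p"
  unfolding Lam_def Gam_def using zp_of_int[of p 0] by (simp add: congp_refl)

lemma add_Lam: "prime p \<Longrightarrow> a \<in> Lam p \<Longrightarrow> b \<in> Lam p \<Longrightarrow> a + b \<in> Lam p"
  using pointwise_Lam[of p a b "(+)"] zp_add congp_add by (simp add: plus_fun_def)

lemma diff_Lam: "prime p \<Longrightarrow> a \<in> Lam p \<Longrightarrow> b \<in> Lam p \<Longrightarrow> a - b \<in> Lam p"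
  using pointwise_Lam[of p a b "(-)"] zp_diff congp_diff by (simp add: fun_diff_def)

lemma msc_p_Lam:
  assumes p: "prime p" and a: "a \<in> Gam p"
  shows "msc (of_nat p) a \<in> Lam p"
proof (rule LamI)
  show "msc (of_nat p) a \<in> Gam p"
    using a p unfolding Gam_def msc_def by (auto intro: zp_mult_p)
qed (use congp_mult_p[OF p Gam_zp[OF a] Gam_zp[OF a]]
         congp_mult_p[OF p Gam_zp[OF a] zp_of_int[OF p, of 0]] in \<open>simp_all add: msc_def\<close>)

lemma eL_memI: "rho \<in> Lam p \<Longrightarrow> mmul (etl p k) rho \<in> eL p k"
  unfolding eL_def by blast

lemma eL_memE: "x \<in> eL p k \<Longrightarrow> (\<And>rho. rho \<in> Lam p \<Longrightarrow> x = mmul (etl p k) rho \<Longrightarrow> P) \<Longrightarrow> P"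
  unfolding eL_def by blast

lemma pEL_memI: "x \<in> eL p k \<Longrightarrow> msc (of_nat p) x \<in> pEL p k"
  unfolding pEL_def by blast

lemma pEL_memE: "x \<in> pEL p k \<Longrightarrow> (\<And>y. y \<in> eL p k \<Longrightarrow> x = msc (of_nat p) y \<Longrightarrow> P) \<Longrightarrow> P"
  unfolding pEL_def by blast

lemma zero_eL: "prime p \<Longrightarrow> 0 \<in> eL p k"
  using eL_memI[OF zero_Lam] by fastforce

lemma add_eL: "prime p \<Longrightarrow> x \<in> eL p k \<Longrightarrow> y \<in> eL p k \<Longrightarrow> x + y \<in> eL p k"
  by (metis eL_memE eL_memI add_Lam mmul_add_right)

lemma diff_eL: "prime p \<Longrightarrow> x \<in> eL p k \<Longrightarrow> y \<in> eL p k \<Longrightarrow> x - y \<in> eL p k"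
  by (metis eL_memE eL_memI diff_Lam mmul_diff_right)

lemma zero_pEL: "prime p \<Longrightarrow> 0 \<in> pEL p k"
  using pEL_memI[OF zero_eL] by fastforce

lemma add_pEL: "prime p \<Longrightarrow> x \<in> pEL p k \<Longrightarrow> y \<in> pEL p k \<Longrightarrow> x + y \<in> pEL p k"
  by (metis pEL_memE pEL_memI add_eL msc_add)

lemma diff_pEL: "prime p \<Longrightarrow> x \<in> pEL p k \<Longrightarrow> y \<in> pEL p k \<Longrightarrow> x - y \<in> pEL p k"
  by (metis pEL_memE pEL_memI diff_eL msc_diff)

lemma eL_support:
  assumes "x \<in> eL p k" "x lam i j \<noteq> 0"
  shows "is_partition p lam \<and> i \<in> {1..nlam lam} \<and> j \<in> {1..nlam lam}"
proof -
  obtain rho where "rho \<in> Lam p" "x = mmul (etl p k) rho" using assms(1) eL_memE by blast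
  with assms(2) show ?thesis
    using Gam_support[OF Lam_Gam] unfolding mmul_etl by (auto split: if_splits)
qed

lemma eL_Gam:
  assumes p: "prime p" and x: "x \<in> eL p k"
  shows "x \<in> Gam p"
proof -
  obtain rho where rho: "rho \<in> Lam p" "x = mmul (etl p k) rho" using x eL_memE by blast
  have "zp p (x lam i j)" for lam i j
    unfolding rho(2) mmul_etl
    by (intro zp_add[OF p]) (simp_all add: Gam_zp[OF Lam_Gam[OF rho(1)]] zp_zero[OF p])
  then show ?thesis unfolding Gam_def using eL_support[OF x] by blast
qed

lemma pEL_subset_eL: "prime p \<Longrightarrow> pEL p k \<subseteq> eL p k"
  by (auto elim!: pEL_memE eL_memE simp flip: mmul_msc_right
      intro!: eL_memI msc_p_Lam Lam_Gam)

lemma zeroc_eq_pEL: "prime p \<Longrightarrow> zeroc p k = pEL p k"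
  unfolding zeroc_def using pEL_subset_eL by blast

lemma Pmod_cosetE:
  assumes "X \<in> Pmod p k"
  obtains x0 where "x0 \<in> eL p k" "X = {y \<in> eL p k. x0 - y \<in> pEL p k}"
  using assms unfolding Pmod_def quotient_def by auto

lemma zeroc_Pmod:
  assumes p: "prime p"
  shows "zeroc p k \<in> Pmod p k"
proof -
  let ?R = "{(x, y). x \<in> eL p k \<and> y \<in> eL p k \<and> x - y \<in> pEL p k}"
  have "zeroc p k = ?R `` {0}"
    using diff_pEL[OF p zero_pEL[OF p]] zero_eL[OF p] unfolding zeroc_def by force
  moreover have "?R `` {0} \<in> eL p k // ?R" by (rule quotientI[OF zero_eL[OF p]])
  ultimately show ?thesis unfolding Pmod_def msub_eq_minus by simp
qed

lemma addc_commute: "addc p k X Y = addc p k Y X"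
proof -
  have "(\<exists>x\<in>X. \<exists>y\<in>Y. z - (x + y) \<in> S) \<longleftrightarrow> (\<exists>y\<in>Y. \<exists>x\<in>X. z - (y + x) \<in> S)"
    for z :: elt and S by (metis add.commute)
  then show ?thesis unfolding addc_def by simp
qed

lemma addc_zeroc_right:
  assumes p: "prime p" and X: "X \<in> Pmod p k"
  shows "addc p k X (zeroc p k) = X"
proof -
  obtain x0 where x0: "x0 \<in> eL p k" "X = {y \<in> eL p k. x0 - y \<in> pEL p k}"
    using Pmod_cosetE[OF X] .
  show ?thesis
  proof (intro equalityI subsetI)
    fix z assume "z \<in> addc p k X (zeroc p k)"
    then obtain x y where xy: "z \<in> eL p k" "x \<in> X" "y \<in> pEL p k" "z - (x + y) \<in> pEL p k"
      unfolding addc_def zeroc_eq_pEL[OF p] by auto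
    have "x0 - x \<in> pEL p k" using xy(2) x0 by auto
    then have "(x0 - x) - ((z - (x + y)) + y) \<in> pEL p k"
      using xy(4,3) by (rule diff_pEL[OF p _ add_pEL[OF p]])
    also have "(x0 - x) - ((z - (x + y)) + y) = x0 - z" by (simp add: algebra_simps)
    finally show "z \<in> X" using xy(1) x0(2) by blast
  next
    fix z assume "z \<in> X"
    then show "z \<in> addc p k X (zeroc p k)"
      unfolding addc_def zeroc_eq_pEL[OF p] using x0 zero_pEL[OF p] by force
  qed
qed

lemma addc_zeroc_left: "prime p \<Longrightarrow> X \<in> Pmod p k \<Longrightarrow> addc p k (zeroc p k) X = X"
  using addc_zeroc_right addc_commute by simp

lemma ind_zeroc:
  assumes p: "prime p"
    and a: "\<And>x. x \<in> pEL p k \<Longrightarrow> mmul a x \<in> eL p k' \<Longrightarrow> mmul a x \<in> pEL p k'"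
  shows "ind p k' a (zeroc p k) = zeroc p k'"
proof (intro equalityI subsetI)
  fix y assume "y \<in> ind p k' a (zeroc p k)"
  then obtain x where x: "y \<in> eL p k'" "x \<in> pEL p k" "y - mmul a x \<in> pEL p k'"
    unfolding ind_def zeroc_eq_pEL[OF p] by (auto intro!: bexI[of _ 0])
  have "mmul a x = y - (y - mmul a x)" by simp
  then have "mmul a x \<in> eL p k'" using x diff_eL[OF p] pEL_subset_eL[OF p] by (metis subsetD)
  with x have "(y - mmul a x) + mmul a x \<in> pEL p k'" using a add_pEL[OF p] by blast
  then show "y \<in> zeroc p k'" using zeroc_eq_pEL[OF p] by simp
next
  fix y assume "y \<in> zeroc p k'"
  then show "y \<in> ind p k' a (zeroc p k)"
    using zero_pEL[OF p] pEL_subset_eL[OF p] unfolding ind_def zeroc_eq_pEL[OF p] by (auto intro!: bexI[of _ 0])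
qed

section \<open>The maps \<open>e\<^sub>k\<^sub>+\<^sub>1\<^sub>,\<^sub>k\<close> and \<open>e\<^sub>k\<^sub>,\<^sub>k\<^sub>+\<^sub>1\<close> preserve zero\<close>

lemma length_hook: "1 \<le> k \<Longrightarrow> length (hook p k) = k"
  unfolding hook_def by simp

lemma hook_eq_iff: "1 \<le> k \<Longrightarrow> 1 \<le> k' \<Longrightarrow> hook p k = hook p k' \<longleftrightarrow> k = k'"
  using length_hook by metis

lemma nc_Suc: "1 \<le> r \<Longrightarrow> nc p (Suc r) = nb p r"
  unfolding nc_def nb_def by (simp add: Suc_diff_le numeral_2_eq_2)

lemma nc_pos: "2 \<le> k \<Longrightarrow> k \<le> p \<Longrightarrow> 1 \<le> nc p k"
  unfolding nc_def by (simp add: Suc_le_eq)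

lemma mmul_etl_fixes:
  assumes k: "1 \<le> k" and sig: "sig \<in> Gam p"
    and rows: "\<And>lam i j. sig lam i j \<noteq> 0 \<Longrightarrow>
      (lam = hook p k \<and> i = nc p k + 1) \<or> (lam = hook p (Suc k) \<and> i = 1)"
  shows "mmul (etl p k) sig = sig"
proof (intro ext)
  fix lam i j
  have "hook p k \<noteq> hook p (Suc k)" using hook_eq_iff[of k "Suc k" p] k by simp
  then show "mmul (etl p k) sig lam i j = sig lam i j"
    using rows[of lam i j] Gam_support[OF sig, of lam i j] unfolding mmul_etl by auto
qed

lemma e_down_mult_pEL:
  assumes p: "prime p" and k: "1 \<le> k" and x: "x \<in> pEL p (Suc k)"
  shows "mmul (msc (of_nat p) (eta (hook p (Suc k)) 1 (nc p (Suc k) + 1))) x \<in> pEL p k"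
proof -
  let ?H = "hook p (Suc k)" and ?N = "nc p (Suc k)"
  obtain y where y: "y \<in> eL p (Suc k)" "x = msc (of_nat p) y" using x pEL_memE by blast
  have y_Gam: "y \<in> Gam p" using eL_Gam[OF p y(1)] .
  define sig where "sig = mmul (eta ?H 1 (?N + 1)) y"
  have sig_entry: "sig lam i j = (if lam = ?H \<and> i = 1 \<and> ?N + 1 \<in> {1..nlam ?H} then y ?H (?N + 1) j else 0)"
    for lam i j unfolding sig_def mmul_eta by simp
  have "sig \<in> Gam p"
    using Gam_support[OF y_Gam] Gam_zp[OF y_Gam] zp_zero[OF p]
    unfolding Gam_def sig_entry by auto
  then have psig_Lam: "msc (of_nat p) sig \<in> Lam p" using msc_p_Lam[OF p] by blast
  have "mmul (etl p k) (msc (of_nat p) sig) = msc (of_nat p) sig"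
    using Lam_Gam[OF psig_Lam] by (rule mmul_etl_fixes[OF k]) (auto simp: msc_def sig_entry split: if_splits)
  then have "msc (of_nat p) sig \<in> eL p k" using eL_memI[OF psig_Lam] by metis
  then show ?thesis
    unfolding y(2) mmul_msc_left mmul_msc_right sig_def[symmetric] by (rule pEL_memI)
qed

lemma e_up_row_Lam:
  assumes p: "prime p" and r: "1 \<le> r" "r \<le> p - 2" and y: "y \<in> eL p r"
    and sig_Gam: "mmul (eta (hook p (Suc r)) (nc p (Suc r) + 1) 1) y \<in> Gam p"
  shows "mmul (eta (hook p (Suc r)) (nc p (Suc r) + 1) 1) y \<in> Lam p"
proof -
  let ?H = "hook p (Suc r)" and ?N = "nc p (Suc r)"
  define sig where "sig = mmul (eta ?H (?N + 1) 1) y"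
  have sig_entry: "sig lam i j = (if lam = ?H \<and> i = ?N + 1 \<and> 1 \<le> nlam ?H then y ?H 1 j else 0)"
    for lam i j unfolding sig_def mmul_eta by simp
  have hook_eq: "hook p k = ?H \<longleftrightarrow> k = Suc r" if "k \<in> {1..p-1}" for k
    using hook_eq_iff[of k "Suc r" p] that by auto
  have N: "?N = nb p r" "1 \<le> ?N" using nc_Suc[OF r(1)] nc_pos[of "Suc r" p] r by auto
  obtain rho where rho: "rho \<in> Lam p" "y = mmul (etl p r) rho" using y eL_memE by blast
  have "hook p r \<noteq> ?H" using hook_eq_iff[of r "Suc r" p] r(1) by simp
  then have y_row: "y ?H 1 j = (if 1 \<le> nlam ?H then rho ?H 1 j else 0)" for j
    unfolding rho(2) mmul_etl by simp
  show ?thesis unfolding sig_def[symmetric]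
  proof (rule LamI[OF sig_Gam[folded sig_def]])
    fix k a b assume kab: "k \<in> {1..p-1}" "a \<in> {1..nb p k}" "b \<in> {1..nb p k}"
    have "sig (hook p (Suc k)) a b = 0"
      using kab N hook_eq_iff[of "Suc k" "Suc r" p] by (auto simp: sig_entry)
    moreover have "congp p (sig (hook p k) (nc p k + a) (nc p k + b)) 0"
    proof (cases "k = Suc r \<and> a = 1")
      case True
      have "congp p (rho ?H 1 (?N + b)) 0" using Lam_bc[OF rho(1), of "Suc r" 1 b] kab N r True by auto
      then have "congp p (y ?H 1 (?N + b)) 0" unfolding y_row using congp_refl[OF p] by simp
      then show ?thesis using True congp_refl[OF p] by (simp add: sig_entry)
    qed (use kab hook_eq congp_refl[OF p] in \<open>auto simp: sig_entry\<close>)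
    ultimately show "congp p (sig (hook p k) (nc p k + a) (nc p k + b)) (sig (hook p (Suc k)) a b)"
      by simp
  next
    fix k a b assume "k \<in> {1..p-1}" "a \<in> {1..nc p k}" "b \<in> {1..nb p k}"
    then show "congp p (sig (hook p k) a (nc p k + b)) 0"
      using hook_eq congp_refl[OF p] by (auto simp: sig_entry)
  qed
qed

lemma e_up_mult_pEL:
  assumes p: "prime p" and r: "1 \<le> r" "r \<le> p - 2" and x: "x \<in> pEL p r"
    and ax: "mmul (eta (hook p (Suc r)) (nc p (Suc r) + 1) 1) x \<in> eL p (Suc r)"
  shows "mmul (eta (hook p (Suc r)) (nc p (Suc r) + 1) 1) x \<in> pEL p (Suc r)"
proof -
  let ?a = "eta (hook p (Suc r)) (nc p (Suc r) + 1) 1"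
  obtain y where y: "y \<in> eL p r" "x = msc (of_nat p) y" using x pEL_memE by blast
  define sig where "sig = mmul ?a y"
  have ax_eq: "mmul ?a x = msc (of_nat p) sig" unfolding sig_def y(2) mmul_msc_right ..
  have "zp p (sig lam i j)" for lam i j
    unfolding sig_def mmul_eta using Gam_zp[OF eL_Gam[OF p y(1)]] zp_zero[OF p] by simp
  \<comment> \<open>the size of \<open>\<lambda>\<^sup>r\<^sup>+\<^sup>1\<close> is not computed here: the support condition is read off from \<open>p \<cdot> sig \<in> e\<^sub>r\<^sub>+\<^sub>1\<Lambda>\<close>\<close>
  moreover have "sig lam i j \<noteq> 0 \<Longrightarrow> is_partition p lam \<and> i \<in> {1..nlam lam} \<and> j \<in> {1..nlam lam}"
    for lam i j using eL_support[OF ax[unfolded ax_eq]] prime_gt_0_nat[OF p] by (simp add: msc_def)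
  ultimately have sig_Gam: "sig \<in> Gam p" unfolding Gam_def by blast
  have sig_Lam: "sig \<in> Lam p" unfolding sig_def by (rule e_up_row_Lam[OF p r y(1) sig_Gam[unfolded sig_def]])
  have "mmul (etl p (Suc r)) sig = sig"
    by (rule mmul_etl_fixes[OF _ sig_Gam]) (simp_all add: sig_def mmul_eta split: if_splits)
  then have "sig \<in> eL p (Suc r)" using eL_memI[OF sig_Lam] by metis
  then show ?thesis unfolding ax_eq by (rule pEL_memI)
qed

lemma e_up_zeroc:
  assumes "prime p" "1 \<le> r" "r \<le> p - 2"
  shows "e_up p r (zeroc p r) = zeroc p (Suc r)"
  unfolding e_up_def using ind_zeroc[OF assms(1) e_up_mult_pEL[OF assms]] .

lemma e_down_zeroc:
  assumes "prime p" "1 \<le> k"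
  shows "e_down p k (zeroc p (Suc k)) = zeroc p k"
  unfolding e_down_def using ind_zeroc[OF assms(1) e_down_mult_pEL[OF assms]] .

section \<open>Components of the homotopies\<close>

lemma iota_pow_id: "iota_pow p n = (\<lambda>i. id)"
  by (induction n) (simp_all add: gcomp_def iota_def)

lemma foldr_gadd_apply:
  "foldr (\<lambda>k acc. gadd p (h k) acc) xs g j X
     = foldr (\<lambda>k A. addc p (omega p j) (h k j X) A) xs (g j X)"
  by (induction xs) (simp_all add: gadd_def)

lemma foldr_addc_indicator:
  assumes p: "prime p" and X: "X \<in> Pmod p k0" and "distinct xs"
    and F: "\<And>k. k \<in> set xs \<Longrightarrow> F k = (if P k then X else zeroc p k0)"
    and unique: "\<And>k k'. k \<in> set xs \<Longrightarrow> k' \<in> set xs \<Longrightarrow> P k \<Longrightarrow> P k' \<Longrightarrow> k = k'"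
  shows "foldr (\<lambda>k A. addc p k0 (F k) A) xs (zeroc p k0)
    = (if \<exists>k \<in> set xs. P k then X else zeroc p k0)"
  using assms(3-5)
proof (induction xs)
  case (Cons a xs)
  then have IH: "foldr (\<lambda>k A. addc p k0 (F k) A) xs (zeroc p k0)
      = (if \<exists>k \<in> set xs. P k then X else zeroc p k0)" by simp
  show ?case
  proof (cases "P a")
    case True
    then have "\<not> (\<exists>k \<in> set xs. P k)" using Cons.prems(1,3) by force
    with True show ?thesis using IH Cons.prems(2) addc_zeroc_right[OF p X] by simp
  next
    case False
    then show ?thesis
      using IH Cons.prems(2) addc_zeroc_left[OF p] X zeroc_Pmod[OF p] by simp
  qed
qed simp

lemma omega_eq: "omega p j = (if j mod ll p \<le> p - 2 then j mod ll p + 1 else ll p - j mod ll p)"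
  by (simp add: omega_def Let_def)

lemma chi_eq:
  assumes "2 \<le> p"
  shows "chi p j = (if j mod ll p = 0 then id
     else if j mod ll p \<le> p - 2 then e_up p (j mod ll p)
     else if j mod ll p = p - 1 then id
     else e_down p (ll p - j mod ll p))"
proof -
  have "j mod ll p < ll p" using assms unfolding ll_def by simp
  then have "p - (j mod ll p - (p - 1)) - 1 = ll p - j mod ll p" if "p - 1 < j mod ll p"
    using that unfolding ll_def by auto
  then show ?thesis unfolding chi_def Let_def by auto
qed

lemma gamma_eq:
  assumes "1 \<le> k" "k \<le> p - 1"
  shows "gamma p k j = (if j mod ll p = k - 1 \<or> j mod ll p = k + p - 2 then id
                        else (\<lambda>X. zeroc p (omega p j)))"
proof -
  have mod_iff: "(\<exists>i. j = c + ll p * i) \<longleftrightarrow> j mod ll p = c" if "c < ll p" for c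
    using that by (metis add.commute mod_mult_self2 mod_less mult_div_mod_eq mult.commute)
  have "k - 1 < ll p" "k + p - 2 < ll p" "k - 1 + (p - 1) = k + p - 2"
    using assms unfolding ll_def by auto
  then have "(\<exists>i. j = k - 1 + ll p * i) \<longleftrightarrow> j mod ll p = k - 1"
    "(\<exists>i. j = k - 1 + (p - 1) + ll p * i) \<longleftrightarrow> j mod ll p = k + p - 2"
    using mod_iff by presburger+
  then show ?thesis unfolding gamma_def by simp
qed

lemma add_deg_chi_mod:
  assumes "2 \<le> p"
  shows "(j + deg_chi p) mod ll p = (if j mod ll p = 0 then ll p - 1 else j mod ll p - 1)"
proof -
  have l: "0 < ll p" using assms unfolding ll_def by simp
  have "(j + deg_chi p) mod ll p = (j mod ll p + (ll p - 1)) mod ll p"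
    unfolding deg_chi_def by (simp add: mod_add_left_eq)
  also have "\<dots> = (if j mod ll p = 0 then ll p - 1 else j mod ll p - 1)"
  proof (cases "j mod ll p = 0")
    case False
    then have e: "j mod ll p + (ll p - 1) = (j mod ll p - 1) + ll p" using l by auto
    show ?thesis unfolding e mod_add_self2 using False l by (simp add: less_imp_diff_less)
  qed (use l in simp)
  finally show ?thesis .
qed

lemma add_deg_gamma_mod:
  assumes "1 \<le> k" "k \<le> p - 1"
  shows "(j + deg_gamma p k) mod ll p = (j mod ll p + (ll p + 1 - 2 * k)) mod ll p"
proof -
  obtain k' where k: "k = Suc k'" using assms by (cases k) auto
  have "2 * k' \<le> ll p - 1" "1 \<le> ll p" using assms k unfolding ll_def by auto
  moreover have "deg_gamma p k = (ll p - 1) + k' * (ll p - 1) - k'"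
    unfolding deg_gamma_def k by simp
  moreover have "k' * (ll p - 1) + k' = ll p * k'"
    using \<open>1 \<le> ll p\<close> by (simp add: diff_mult_distrib2 algebra_simps)
  ultimately have "deg_gamma p k = (ll p - 1 - 2 * k') + ll p * k'"
    by linarith
  moreover have "ll p + 1 - 2 * k = ll p - 1 - 2 * k'" "k - 1 = k'" using k by auto
  ultimately have "deg_gamma p k = (ll p + 1 - 2 * k) + ll p * (k - 1)" by simp
  then show ?thesis by (simp add: mod_add_left_eq add.assoc[symmetric])
qed

lemma mod_eq_diff_if_less_double: "(m::nat) \<le> a \<Longrightarrow> a < 2 * m \<Longrightarrow> a mod m = a - m"
  by (simp add: le_mod_geq)

lemma chi_zeroc:
  assumes p: "prime p" "3 \<le> p"
  shows "chi p j (zeroc p (omega p (j + deg_chi p))) = zeroc p (omega p j)"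
proof -
  have p2: "2 \<le> p" using assms by linarith
  define r where "r = j mod ll p"
  define s where "s = (j + deg_chi p) mod ll p"
  have l: "ll p = 2 * p - 2" "r < ll p" using p unfolding r_def ll_def by auto
  have s: "s = (if r = 0 then ll p - 1 else r - 1)"
    unfolding s_def r_def using add_deg_chi_mod p by simp
  have src: "omega p (j + deg_chi p) = (if s \<le> p - 2 then s + 1 else ll p - s)"
    unfolding omega_eq s_def ..
  have tgt: "omega p j = (if r \<le> p - 2 then r + 1 else ll p - r)"
    unfolding omega_eq r_def ..
  have chi: "chi p j = (if r = 0 then id else if r \<le> p - 2 then e_up p r
      else if r = p - 1 then id else e_down p (ll p - r))"
    unfolding chi_eq[OF p2] r_def ..
  consider "r = 0" | "1 \<le> r" "r \<le> p - 2" | "r = p - 1" | "p \<le> r" using p by linarith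
  then show ?thesis
  proof cases
    case 1
    then have "\<not> s \<le> p - 2" "ll p - s = 1" "r \<le> p - 2" using s l p by auto
    then show ?thesis unfolding src tgt chi using 1 by simp
  next
    case 2
    then have "s \<le> p - 2" "s + 1 = r" "r \<noteq> 0" using s by auto
    then show ?thesis unfolding src tgt chi using 2 e_up_zeroc[OF p(1) 2] by simp
  next
    case 3
    then have "s \<le> p - 2" "s + 1 = p - 1" "\<not> r \<le> p - 2" "r \<noteq> 0" "ll p - r = p - 1"
      using s l p by auto
    then show ?thesis unfolding src tgt chi using 3 by simp
  next
    case 4
    then have "\<not> s \<le> p - 2" "ll p - s = Suc (ll p - r)" "\<not> r \<le> p - 2" "r \<noteq> 0"
        "r \<noteq> p - 1" "1 \<le> ll p - r"
      using s l p by auto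
    then show ?thesis unfolding src tgt chi using e_down_zeroc[OF p(1)] by simp
  qed
qed

lemma chi_comp_gamma_apply:
  assumes p: "prime p" "3 \<le> p"
  shows "chi p j (gamma p (p - 1) (j + deg_chi p) X) =
    (if j mod ll p = 0 \<or> j mod ll p = p - 1 then X else zeroc p (omega p j))"
proof -
  have p2: "2 \<le> p" using assms by linarith
  define r where "r = j mod ll p"
  define s where "s = (j + deg_chi p) mod ll p"
  have l: "ll p = 2 * p - 2" "r < ll p" using p unfolding r_def ll_def by auto
  have s: "s = (if r = 0 then ll p - 1 else r - 1)"
    unfolding s_def r_def using add_deg_chi_mod p by simp
  have gamma: "gamma p (p - 1) (j + deg_chi p) =
      (if s = p - 2 \<or> s = 2 * p - 3 then id else (\<lambda>X. zeroc p (omega p (j + deg_chi p))))"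
    using gamma_eq[of "p - 1" p] p unfolding s_def by (simp add: numeral_eq_Suc)
  have chi: "chi p j = (if r = 0 then id else if r \<le> p - 2 then e_up p r
      else if r = p - 1 then id else e_down p (ll p - r))"
    unfolding chi_eq[OF p2] r_def ..
  show ?thesis
  proof (cases "r = 0 \<or> r = p - 1")
    case True
    then have "s = p - 2 \<or> s = 2 * p - 3" "\<not> r \<le> p - 2 \<or> r = 0" using s l p by auto
    then have "gamma p (p - 1) (j + deg_chi p) = id" "chi p j = id"
      unfolding gamma chi using True by auto
    with True show ?thesis unfolding r_def by simp
  next
    case False
    then have "\<not> (s = p - 2 \<or> s = 2 * p - 3)" using s l p by auto
    then have "gamma p (p - 1) (j + deg_chi p) X = zeroc p (omega p (j + deg_chi p))"
      unfolding gamma by simp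
    with False show ?thesis unfolding r_def using chi_zeroc[OF p] by simp
  qed
qed

lemma gamma_comp_chi_apply:
  assumes p: "3 \<le> p"
  shows "gamma p (p - 1) j (chi p (j + deg_gamma p (p - 1)) X) =
    (if j mod ll p = p - 2 \<or> j mod ll p = 2 * p - 3 then X else zeroc p (omega p j))"
proof -
  have p2: "2 \<le> p" using assms by linarith
  define r where "r = j mod ll p"
  define s where "s = (j + deg_gamma p (p - 1)) mod ll p"
  have l: "ll p = 2 * p - 2" "r < ll p" using p unfolding r_def ll_def by auto
  have "ll p + 1 - 2 * (p - 1) = 1" using l p by simp
  then have s: "s = (r + 1) mod ll p"
    unfolding s_def r_def using add_deg_gamma_mod[of "p - 1" p j] p by simp
  have gamma: "gamma p (p - 1) j = (if r = p - 2 \<or> r = 2 * p - 3 then id else (\<lambda>X. zeroc p (omega p j)))"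
    using gamma_eq[of "p - 1" p] p unfolding r_def by (simp add: numeral_eq_Suc)
  show ?thesis
  proof (cases "r = p - 2 \<or> r = 2 * p - 3")
    case True
    then have "r + 1 = p - 1 \<or> r + 1 = ll p" "p - 1 < ll p" using l p by auto
    then have "s = p - 1 \<or> s = 0" using s by auto
    then have "chi p (j + deg_gamma p (p - 1)) = id" using p unfolding chi_eq[OF p2] s_def[symmetric] by auto
    moreover have "gamma p (p - 1) j = id" unfolding gamma using True by simp
    ultimately show ?thesis using True unfolding r_def by simp
  next
    case False
    then have "gamma p (p - 1) j = (\<lambda>X. zeroc p (omega p j))" unfolding gamma by simp
    with False show ?thesis unfolding r_def by simp
  qed
qed

lemma gamma_comp_gamma_apply:
  assumes p: "3 \<le> p" and k: "2 \<le> k" "k \<le> p - 2"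
  shows "gamma p k j (gamma p (p - k) (j + deg_gamma p k) X) =
    (if j mod ll p = k - 1 \<or> j mod ll p = k + p - 2 then X else zeroc p (omega p j))"
proof -
  define r where "r = j mod ll p"
  define s where "s = (j + deg_gamma p k) mod ll p"
  have l: "ll p = 2 * p - 2" using p unfolding ll_def by auto
  have s: "s = (r + (ll p + 1 - 2 * k)) mod ll p"
    unfolding s_def r_def using add_deg_gamma_mod[of k p j] k by simp
  have gamma: "gamma p k j = (if r = k - 1 \<or> r = k + p - 2 then id else (\<lambda>X. zeroc p (omega p j)))"
    using gamma_eq[of k p] k unfolding r_def by simp
  show ?thesis
  proof (cases "r = k - 1 \<or> r = k + p - 2")
    case True
    then have "s = p - k - 1 \<or> s = p - k + p - 2"
      using s l p k mod_eq_diff_if_less_double[of "ll p" "r + (ll p + 1 - 2 * k)"] by auto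
    then have "gamma p (p - k) (j + deg_gamma p k) = id"
      using gamma_eq[of "p - k" p] k unfolding s_def by auto
    moreover have "gamma p k j = id" unfolding gamma using True by simp
    ultimately show ?thesis using True unfolding r_def by simp
  qed (simp add: gamma r_def)
qed

lemma residue_trichotomy:
  assumes p: "3 \<le> p" and r: "r < 2 * p - 2"
  obtains (chi_gamma) "r = 0 \<or> r = p - 1" "\<not> (r = p - 2 \<or> r = 2 * p - 3)"
      "\<not> (\<exists>k \<in> set [2..<p - 1]. r = k - 1 \<or> r = k + p - 2)"
    | (gamma_chi) "\<not> (r = 0 \<or> r = p - 1)" "r = p - 2 \<or> r = 2 * p - 3"
      "\<not> (\<exists>k \<in> set [2..<p - 1]. r = k - 1 \<or> r = k + p - 2)"
    | (gamma_gamma) "\<not> (r = 0 \<or> r = p - 1)" "\<not> (r = p - 2 \<or> r = 2 * p - 3)"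
      "\<exists>k \<in> set [2..<p - 1]. r = k - 1 \<or> r = k + p - 2"
proof -
  consider "r = 0 \<or> r = p - 1" | "r = p - 2 \<or> r = 2 * p - 3"
    | "1 \<le> r" "r \<le> p - 3" | "p \<le> r" "r \<le> 2 * p - 4" using p r by linarith
  then show ?thesis
  proof cases
    case 1
    then show ?thesis using p by (intro chi_gamma) auto
  next
    case 2
    then show ?thesis using p by (intro gamma_chi) auto
  next
    case 3
    then show ?thesis using p by (intro gamma_gamma) (auto intro!: bexI[of _ "r + 1"])
  next
    case 4
    then show ?thesis using p by (intro gamma_gamma) (auto intro!: bexI[of _ "r + 2 - p"])
  qed
qed

lemma homotopy_relation_component:
  assumes p: "prime p" "3 \<le> p" and X: "X \<in> Pmod p (omega p j)"
  shows "addc p (omega p j)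
      (addc p (omega p j) (chi p j (gamma p (p - 1) (j + deg_chi p) X))
                          (gamma p (p - 1) j (chi p (j + deg_gamma p (p - 1)) X)))
      (foldr (\<lambda>k A. addc p (omega p j) (gamma p k j (gamma p (p - k) (j + deg_gamma p k) X)) A)
             [2..<p - 1] (zeroc p (omega p j)))
    = X"
proof -
  define r where "r = j mod ll p"
  have "0 < ll p" "ll p = 2 * p - 2" using p unfolding ll_def by auto
  then have r: "r < 2 * p - 2" unfolding r_def by (metis mod_less_divisor)
  have "foldr (\<lambda>k A. addc p (omega p j) (gamma p k j (gamma p (p - k) (j + deg_gamma p k) X)) A)
      [2..<p - 1] (zeroc p (omega p j))
    = (if \<exists>k \<in> set [2..<p - 1]. r = k - 1 \<or> r = k + p - 2 then X else zeroc p (omega p j))"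
    by (rule foldr_addc_indicator[OF p(1) X]) (auto simp: gamma_comp_gamma_apply[OF p(2)] r_def)
  with residue_trichotomy[OF p(2) r] show ?thesis
    unfolding chi_comp_gamma_apply[OF p] gamma_comp_chi_apply[OF p(2)] r_def[symmetric]
    by cases (simp_all add: addc_zeroc_left addc_zeroc_right X zeroc_Pmod p)
qed

theorem mainTheorem9:
  fixes p :: nat
  assumes "prime p" and "3 \<le> p"
  shows "\<forall>j. \<forall>X \<in> Pmod p (omega p (j + (p - 1) * ll p)).
    gadd p (gadd p (gcomp (chi p) (deg_chi p) (gamma p (p - 1)))
                   (gcomp (gamma p (p - 1)) (deg_gamma p (p - 1)) (chi p)))
           (foldr (\<lambda>k acc. gadd p (gcomp (gamma p k) (deg_gamma p k) (gamma p (p - k))) acc)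
                  [2..<p - 1] (gzero p)) j X
    = iota_pow p (p - 1) j X"
  using homotopy_relation_component[OF assms]
  unfolding gadd_def[of p _ "foldr _ _ _"] foldr_gadd_apply
  by (simp add: gadd_def gcomp_def gzero_def iota_pow_id omega_def)

end
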